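(* Let $b \ge 2$ and $k \ge 1$ be integers. Let $m\ge 1$ be an integer with $\gcd(m,b)=1$, and let $r$ be an integer with $0\le r<m$. Then there exist infinitely many positive integers $n$ with $n\equiv r\pmod m$ that are $b^{\ell}$-Niven for all $\ell$ with $1\le \ell\le k$. Moreover, for every $s_0\ge 1$ there exists such an $n$ with \[ \mathsf{s}_b(n)=\mathsf{s}_{b^2}(n)=\cdots = \mathsf{s}_{b^k}(n)\ge s_0. \]
   Context: For an integer base $g\ge 2$ and a positive integer $c$ with base-$g$ expansion $c=\sum_{i=0}^{L} d_i g^i$, $d_i\in\{0,1,\dots,g-1\}$, $d_L\neq 0$, the base-$g$ digit sum is $\mathsf{s}_g(c)=\sum_{i=0}^L d_i$. A positive integer $c$ is called $g$-Niven if $\mathsf{s}_g(c)\mid c$. *)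

theory Defs
  imports Main
begin

fun digit_sum :: "nat \<Rightarrow> nat \<Rightarrow> nat" where
  "digit_sum g c = (if g < 2 \<or> c = 0 then 0 else c mod g + digit_sum g (c div g))"

declare digit_sum.simps[simp del]

definition niven :: "nat \<Rightarrow> nat \<Rightarrow> bool" where
  "niven g c \<longleftrightarrow> c > 0 \<and> digit_sum g c dvd c"

end

theory Submission
  imports Defs "HOL-Number_Theory.Number_Theory"
begin

text \<open>If e > 0 is divisible by 1, ..., k (e.g. a multiple of k!), the number
  n = sum of b^(e i) over i < s has exactly s digits equal to 1 and all others 0 in every base
  b^l with 1 \<le> l \<le> k, so all these digit sums equal s. If moreover e is a multiple of
  \<phi>(s m), Euler's theorem gives n \<equiv> s (mod s m): thus s divides n, and n \<equiv> s (mod m).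
  It remains to pick s large, coprime to b and congruent to r modulo m, which the Chinese
  remainder theorem allows since gcd(m, b) = 1.\<close>

lemma digit_sum_0 [simp]: "digit_sum g 0 = 0"
  by (simp add: digit_sum.simps)

lemma digit_sum_add_mult:
  assumes "g \<ge> 2" "a < g"
  shows "digit_sum g (a + g * y) = a + digit_sum g y"
proof (cases "a + g * y = 0")
  case True
  then show ?thesis using assms by simp
next
  case False
  then show ?thesis using assms by (subst digit_sum.simps) simp
qed

lemma digit_sum_power_mult:
  assumes "g \<ge> 2"
  shows "digit_sum g (g ^ q * y) = digit_sum g y"
proof (induction q)
  case (Suc q)
  have "digit_sum g (g ^ Suc q * y) = digit_sum g (0 + g * (g ^ q * y))"
    by (simp add: mult.assoc)
  also have "\<dots> = digit_sum g (g ^ q * y)"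
    using digit_sum_add_mult[OF assms, of 0] assms by simp
  finally show ?case using Suc by simp
qed simp

definition sparse_repunit :: "nat \<Rightarrow> nat \<Rightarrow> nat \<Rightarrow> nat" where
  "sparse_repunit g e s = (\<Sum>i<s. g ^ (e * i))"

lemma sparse_repunit_Suc:
  "sparse_repunit g e (Suc s) = 1 + g ^ e * sparse_repunit g e s"
  by (simp add: sparse_repunit_def sum.lessThan_Suc_shift power_add sum_distrib_left
      del: sum.lessThan_Suc)

lemma sparse_repunit_power_base:
  "sparse_repunit (g ^ l) q s = sparse_repunit g (l * q) s"
  by (simp add: sparse_repunit_def power_mult mult.assoc)

lemma digit_sum_sparse_repunit:
  assumes "g \<ge> 2" "e > 0"
  shows "digit_sum g (sparse_repunit g e s) = s"
proof (induction s)
  case 0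
  then show ?case by (simp add: sparse_repunit_def)
next
  case (Suc s)
  have "g ^ e = g * g ^ (e - 1)"
    using assms(2) by (simp flip: power_Suc)
  then have "sparse_repunit g e (Suc s) = 1 + g * (g ^ (e - 1) * sparse_repunit g e s)"
    by (simp add: sparse_repunit_Suc mult.assoc)
  then show ?case
    using assms Suc digit_sum_add_mult[OF assms(1), of 1] digit_sum_power_mult[OF assms(1)]
    by simp
qed

lemma digit_sum_power_base_sparse_repunit:
  assumes "g \<ge> 2" "e > 0" "l > 0" "l dvd e"
  shows "digit_sum (g ^ l) (sparse_repunit g e s) = s"
proof -
  obtain q where q: "e = l * q"
    using assms(4) by blast
  have "g ^ l \<ge> 2"
    using assms(1,3) self_le_power[of g l] by simp
  moreover have "q > 0"
    using q assms(2) by simp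
  ultimately show ?thesis
    unfolding q sparse_repunit_power_base[symmetric] by (rule digit_sum_sparse_repunit)
qed

lemma sparse_repunit_ge: "g > 0 \<Longrightarrow> s \<le> sparse_repunit g e s"
  using sum_mono[of "{..<s}" "\<lambda>_. 1" "\<lambda>i. g ^ (e * i)"]
  by (simp add: sparse_repunit_def Suc_le_eq)

lemma sparse_repunit_cong:
  assumes "[g ^ e = 1] (mod M)"
  shows "[sparse_repunit g e s = s] (mod M)"
proof -
  have "[(g ^ e) ^ i = 1 ^ i] (mod M)" for i
    using assms by (rule cong_pow)
  then have "[sparse_repunit g e s = (\<Sum>i<s. 1)] (mod M)"
    unfolding sparse_repunit_def power_mult by (intro cong_sum) simp
  then show ?thesis by simp
qed

lemma power_fact_mult_totient_cong_1:
  assumes "coprime g M"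
  shows "[g ^ (fact k * totient M) = 1] (mod M)"
  using cong_pow[OF euler_theorem[OF assms], of "fact k"]
  by (simp add: power_mult[symmetric] mult.commute)

lemma exists_large_coprime_cong:
  fixes b m r N :: nat
  assumes "b > 0" "m > 0" "coprime m b"
  obtains s where "s \<ge> N" "coprime s b" "[s = r] (mod m)"
proof -
  obtain x where x_b: "[x = 1] (mod b)" and x_m: "[x = r] (mod m)"
    using binary_chinese_remainder_nat[of b m 1 r] assms(3) by (auto simp: ac_simps)
  define s where "s = x + b * m * N"
  have "1 * N \<le> b * m * N"
    using assms(1,2) by (intro mult_le_mono1) simp
  then have "s \<ge> N"
    unfolding s_def by linarith
  moreover have "[s = 1] (mod b)"
    using x_b by (simp add: s_def cong_def mult.assoc)
  then have "coprime s b"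
    by (metis cong_imp_coprime cong_sym coprime_1_left)
  moreover have "[s = r] (mod m)"
    using x_m by (simp add: s_def cong_def mult.commute[of b] mult.assoc)
  ultimately show ?thesis using that by blast
qed

lemma exists_niven_in_power_bases:
  fixes b k m r N :: nat
  assumes "b \<ge> 2" "m > 0" "coprime m b"
  obtains n where "n \<ge> N" "[n = r] (mod m)" "digit_sum b n \<ge> N"
    "\<And>l. l \<in> {1..k} \<Longrightarrow> digit_sum (b ^ l) n = digit_sum b n"
    "\<And>l. l \<in> {1..k} \<Longrightarrow> niven (b ^ l) n"
proof -
  obtain s where s: "s \<ge> Suc N" "coprime s b" "[s = r] (mod m)"
    using exists_large_coprime_cong[of b m "Suc N"] assms by auto
  define e where "e = fact k * totient (s * m)"
  define n where "n = sparse_repunit b e s"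
  have "coprime b (s * m)"
    using s(2) assms(3) by (simp add: ac_simps)
  then have n_cong: "[n = s] (mod s * m)"
    unfolding n_def e_def by (intro sparse_repunit_cong power_fact_mult_totient_cong_1)
  have "s dvd n"
    using cong_modulus_mult_nat[OF n_cong] by (simp add: cong_0_iff[symmetric] cong_def)
  have "[n = r] (mod m)"
    using cong_modulus_mult_nat[of n s m s] n_cong s(3) by (auto simp: ac_simps intro: cong_trans)
  have "n \<ge> s"
    unfolding n_def using assms(1) by (intro sparse_repunit_ge) simp
  have "e > 0"
    using s(1) assms(2) by (simp add: e_def)
  have digits: "digit_sum (b ^ l) n = s" if "l \<in> {1..k}" for l
    unfolding n_def using that assms(1) \<open>e > 0\<close>
    by (intro digit_sum_power_base_sparse_repunit) (auto simp: e_def dvd_fact)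
  have "digit_sum b n = s"
    unfolding n_def using digit_sum_sparse_repunit assms(1) \<open>e > 0\<close> by simp
  then show ?thesis
    using that[of n] s(1) \<open>n \<ge> s\<close> \<open>[n = r] (mod m)\<close> \<open>s dvd n\<close> digits
    by (simp add: niven_def)
qed

theorem corollary7p1:
  fixes b k m r :: nat
  assumes "b \<ge> 2" and "k \<ge> 1" and "m \<ge> 1" and "coprime m b" and "r < m"
  shows "infinite {n. n > 0 \<and> n mod m = r \<and> (\<forall>l\<in>{1..k}. niven (b ^ l) n)}
     \<and> (\<forall>s0\<ge>1. \<exists>n. n > 0 \<and> n mod m = r \<and> (\<forall>l\<in>{1..k}. niven (b ^ l) n)
            \<and> (\<forall>l\<in>{1..k}. digit_sum (b ^ l) n = digit_sum b n) \<and> digit_sum b n \<ge> s0)"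
proof -
  have witness: "\<exists>n\<ge>N. n > 0 \<and> n mod m = r \<and> (\<forall>l\<in>{1..k}. niven (b ^ l) n)
      \<and> (\<forall>l\<in>{1..k}. digit_sum (b ^ l) n = digit_sum b n) \<and> digit_sum b n \<ge> N" for N
  proof -
    obtain n where n: "n \<ge> N" "[n = r] (mod m)" "digit_sum b n \<ge> N"
      "\<And>l. l \<in> {1..k} \<Longrightarrow> digit_sum (b ^ l) n = digit_sum b n"
      "\<And>l. l \<in> {1..k} \<Longrightarrow> niven (b ^ l) n"
      by (rule exists_niven_in_power_bases[where r = r and N = N and k = k, OF assms(1) _ assms(4)])
        (use assms(3) in auto)
    have "n > 0"
      using n(5)[of 1] assms(2) by (simp add: niven_def)
    moreover have "n mod m = r"
      using n(2) assms(5) by (simp add: cong_def)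
    ultimately show ?thesis
      using n by (intro exI[of _ n]) simp
  qed
  show ?thesis
  proof (intro conjI allI impI)
    show "infinite {n. n > 0 \<and> n mod m = r \<and> (\<forall>l\<in>{1..k}. niven (b ^ l) n)}"
      unfolding infinite_nat_iff_unbounded_le using witness by blast
  qed (use witness in blast)
qed

end
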